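(* Let $n\ge k\ge 4$. Let $A$ be a finite arithmetic progression in $\mathbb R$, let $p$ and $q$ be the second and second-to-last points of $A$, let $D\subseteq\{p,q\}$, and suppose $V=A\setminus D$ has exactly $n$ elements. Then $V$ is optimal for $k$-term arithmetic progressions if and only if either (i) $D=\emptyset$, or (ii) $k-1$ divides $n$ and $|D|=1$.
   Context: A finite arithmetic progression is a set $\{a,a+d,\dots,a+(m-1)d\}\subseteq\mathbb R$ with $d>0$; its second point is $a+d$ and its second-to-last point is $a+(m-2)d$. $S_{\mathcal A_k}(V)$ is the number of $k$-term arithmetic progressions contained in $V$. An $n$-set $V$ is optimal for $k$-term arithmetic progressions if $S_{\mathcal A_k}(V)$ equals the maximum of $S_{\mathcal A_k}(W)$ over all $n$-subsets $W\subseteq\mathbb R$, namely $(n-r)(n+r-k+1)/(2k-2)$ with $r$ the remainder of $n$ modulo $k-1$. *)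

theory Defs
  imports Complex_Main
begin

definition AP_set :: "real \<Rightarrow> real \<Rightarrow> nat \<Rightarrow> real set" where
  "AP_set a d m = {a + real i * d | i. i < m}"

definition is_kAP :: "nat \<Rightarrow> real set \<Rightarrow> bool" where
  "is_kAP k P \<longleftrightarrow> (\<exists>a d. d > 0 \<and> P = AP_set a d k)"

definition S_AP :: "nat \<Rightarrow> real set \<Rightarrow> nat" where
  "S_AP k V = card {P. is_kAP k P \<and> P \<subseteq> V}"

definition optimal_AP :: "nat \<Rightarrow> nat \<Rightarrow> real set \<Rightarrow> bool" where
  "optimal_AP k n V \<longleftrightarrow> finite V \<and> card V = n \<and>
     (\<forall>W. finite W \<and> card W = n \<longrightarrow> S_AP k W \<le> S_AP k V)"

end

theory Submission
  imports Defs
begin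

text \<open>A \<open>k\<close>-term progression is determined by its first point and its difference. The
  maximum \<open>\<Sum>i<n. i div (k - 1)\<close> is proved by induction on \<open>k\<close>. Let \<open>L\<close> be the lowest
  \<open>n - \<lceil>n/(k-1)\<rceil>\<close> points of an \<open>n\<close>-set. A progression whose second-to-last point lies
  in \<open>L\<close> has all points except the last in \<open>L\<close>; any other progression is determined by
  its last two points, which both lie above \<open>L\<close>. The progression \<open>{0, \<dots>, n - 1}\<close>
  attains the bound.

  \<open>A - D\<close> is an affine image of a set of indices, so \<open>S(A - D)\<close> counts progressions of
  indices. Going from \<open>{0, \<dots>, n - 1}\<close> to \<open>{0, \<dots>, n} - {1}\<close> gains the
  \<open>n div (k - 1)\<close> progressions ending at \<open>n\<close> and loses the \<open>(n - 1) div (k - 1) + 1\<close>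
  progressions through \<open>1\<close>; the two agree exactly when \<open>k - 1\<close> divides \<open>n\<close>. The
  second-to-last point is the mirror image of the second. Removing both from
  \<open>{0, \<dots>, n + 1}\<close> loses at least \<open>n div (k - 1) + (n - 2) div (k - 1) + 2\<close>
  progressions, which exceeds the gain \<open>n div (k - 1) + (n + 1) div (k - 1)\<close> because
  \<open>k - 1 \<ge> 3\<close>.\<close>

text \<open>The paper's maximum \<open>(n - r)(n + r - k + 1)/(2k - 2)\<close> equals \<open>AP_max (k - 1) n\<close>.\<close>
definition AP_max :: "nat \<Rightarrow> nat \<Rightarrow> nat" where
  "AP_max s n = (\<Sum>i<n. i div s)"

definition AP_pairs :: "nat \<Rightarrow> real set \<Rightarrow> (real \<times> real) set" where
  "AP_pairs k V = {(b, e). 0 < e \<and> (\<forall>j<k. b + real j * e \<in> V)}"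

definition nat_AP_pairs :: "nat \<Rightarrow> nat set \<Rightarrow> (nat \<times> nat) set" where
  "nat_AP_pairs k J = {(i, t). 0 < t \<and> (\<forall>j<k. i + j * t \<in> J)}"

lemma AP_max_Suc: "AP_max s (Suc n) = AP_max s n + n div s"
  by (simp add: AP_max_def)

lemma mem_AP_set: "x \<in> AP_set b e k \<longleftrightarrow> (\<exists>i<k. x = b + real i * e)"
  unfolding AP_set_def by auto

lemma AP_set_eq_image: "AP_set a d N = (\<lambda>i. a + real i * d) ` {..<N}"
  unfolding AP_set_def by auto

lemma finite_AP_set: "finite (AP_set a d N)"
  by (simp add: AP_set_eq_image)

lemma card_AP_set: "0 < d \<Longrightarrow> card (AP_set a d N) = N"
  by (simp add: AP_set_eq_image card_image inj_on_def)

lemma Min_AP_set: "0 < e \<Longrightarrow> 0 < k \<Longrightarrow> Min (AP_set b e k) = b"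
  by (rule Min_eqI) (auto simp: AP_set_eq_image intro!: image_eqI[of _ _ 0])

lemma Max_AP_set: "0 < e \<Longrightarrow> 0 < k \<Longrightarrow> Max (AP_set b e k) = b + real (k - 1) * e"
  by (rule Max_eqI) (auto simp: AP_set_eq_image intro!: image_eqI[of _ _ "k - 1"])

lemma AP_set_inj:
  assumes "0 < e" "0 < e'" "2 \<le> k" "AP_set b e k = AP_set b' e' k"
  shows "b = b' \<and> e = e'"
  using Min_AP_set[of e k b] Min_AP_set[of e' k b'] Max_AP_set[of e k b] Max_AP_set[of e' k b'] assms
  by auto

lemma S_AP_eq_card_AP_pairs:
  assumes "2 \<le> k"
  shows "S_AP k V = card (AP_pairs k V)"
proof -
  have "bij_betw (\<lambda>(b, e). AP_set b e k) (AP_pairs k V) {P. is_kAP k P \<and> P \<subseteq> V}"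
  proof (rule bij_betwI')
    fix x y assume "x \<in> AP_pairs k V" "y \<in> AP_pairs k V"
    then show "((\<lambda>(b, e). AP_set b e k) x = (\<lambda>(b, e). AP_set b e k) y) = (x = y)"
      using AP_set_inj[OF _ _ assms] unfolding AP_pairs_def by (cases x; cases y) auto
  qed (auto simp: AP_pairs_def is_kAP_def AP_set_def)
  then show ?thesis
    unfolding S_AP_def by (simp add: bij_betw_same_card)
qed

lemma finite_AP_pairs:
  assumes "finite V" "2 \<le> k"
  shows "finite (AP_pairs k V)"
proof -
  have "AP_pairs k V \<subseteq> (\<lambda>(x, y). (x, y - x)) ` (V \<times> V)"
  proof clarify
    fix b e assume "(b, e) \<in> AP_pairs k V"
    then have "b \<in> V" "b + e \<in> V"
      using \<open>2 \<le> k\<close> unfolding AP_pairs_def by (auto dest: spec[of _ 0] spec[of _ 1])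
    then show "(b, e) \<in> (\<lambda>(x, y). (x, y - x)) ` (V \<times> V)"
      by (auto intro!: image_eqI[of _ _ "(b, b + e)"])
  qed
  then show ?thesis
    using assms(1) finite_subset by blast
qed

lemma card_less_pairs:
  fixes U :: "'a::linorder set"
  assumes "finite U"
  shows "card {(x, y). x \<in> U \<and> y \<in> U \<and> x < y} = AP_max 1 (card U)"
  using assms
proof (induction rule: finite_linorder_max_induct)
  case empty
  then show ?case by (simp add: AP_max_def)
next
  case (insert b A)
  let ?P = "\<lambda>U. {(x, y). x \<in> U \<and> y \<in> U \<and> x < y}"
  have "?P (insert b A) = ?P A \<union> (\<lambda>x. (x, b)) ` A"
    using insert.hyps(2) by auto
  moreover have "finite (?P A)"
    by (rule finite_subset[of _ "A \<times> A"]) (use insert.hyps(1) in auto)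
  moreover have "?P A \<inter> (\<lambda>x. (x, b)) ` A = {}"
    using insert.hyps(2) by auto
  ultimately have "card (?P (insert b A)) = card (?P A) + card A"
    using insert.hyps(1) by (simp add: card_Un_disjoint card_image inj_on_def)
  moreover have "b \<notin> A"
    using insert.hyps(2) by blast
  ultimately show ?case
    using insert by (simp add: AP_max_Suc)
qed

lemma obtain_lower_part:
  fixes W :: "'a::linorder set"
  assumes "finite W" "m \<le> card W"
  obtains L where "L \<subseteq> W" "card L = m" "\<forall>x\<in>L. \<forall>y\<in>W - L. x < y"
  using assms
proof (induction arbitrary: thesis rule: finite_linorder_max_induct)
  case empty
  then show ?case by simp
next
  case (insert b A)
  show ?case
  proof (cases "m \<le> card A")
    case True
    with insert.IH obtain L where "L \<subseteq> A" "card L = m" "\<forall>x\<in>L. \<forall>y\<in>A - L. x < y"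
      by blast
    with insert.hyps(2) show ?thesis
      by (intro insert.prems(1)[of L]) auto
  next
    case False
    with insert show ?thesis
      by (intro insert.prems(1)[of "insert b A"]) auto
  qed
qed

text \<open>\<open>c n\<close> is \<open>\<lceil>n / (s + 1)\<rceil>\<close>, the number of points kept above the lower part.\<close>
lemma AP_max_Suc_split:
  assumes "0 < s"
  defines "c \<equiv> \<lambda>n. (n + s) div Suc s"
  shows "c n \<le> n \<and> AP_max (Suc s) n = AP_max s (n - c n) + AP_max 1 (c n)"
proof (induction n)
  case 0
  then show ?case by (simp add: AP_max_def c_def)
next
  case (Suc n)
  obtain q r where n: "n = r + q * Suc s" and "r < Suc s"
    using mod_div_mult_eq mod_less_divisor zero_less_Suc by metis
  have div: "(x + q * Suc s) div Suc s = q + x div Suc s" for x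
    by (rule div_mult_self1) simp
  show ?case
  proof (cases "r = 0")
    case True
    then have "c n = q" "c (Suc n) = Suc q" "n div Suc s = q"
      using div[of s] div[of "Suc s"] div[of 0] unfolding c_def n by (simp_all add: ac_simps)
    with Suc.IH show ?thesis
      by (simp add: AP_max_Suc)
  next
    case False
    have "(r + s) div Suc s = 1" "Suc (r + s) div Suc s = 1" "r div Suc s = 0"
      using False \<open>r < Suc s\<close> by (simp_all add: div_if)
    then have c: "c n = Suc q" "c (Suc n) = Suc q" "n div Suc s = q"
      using div[of "r + s"] div[of "Suc (r + s)"] div[of r] unfolding c_def n
      by (simp_all add: ac_simps)
    have "(r - 1 + q * s) div s = q + (r - 1) div s"
      using \<open>0 < s\<close> by (rule div_mult_self1[OF gr_implies_not0])
    moreover have "n - Suc q = r - 1 + q * s"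
      using False by (simp add: n)
    ultimately have "(n - Suc q) div s = q"
      using False \<open>r < Suc s\<close> by simp
    moreover have "n - q = Suc (n - Suc q)"
      using c Suc.IH by arith
    ultimately show ?thesis
      using c Suc.IH by (simp add: AP_max_Suc)
  qed
qed

lemma card_le_by_last_two:
  assumes "finite U" and Z: "\<And>b e. (b, e) \<in> Z \<Longrightarrow> 0 < e \<and> b + real s * e \<in> U \<and> b + real (Suc s) * e \<in> U"
  shows "card Z \<le> AP_max 1 (card U)"
proof -
  let ?g = "\<lambda>(b, e). (b + real s * e, b + real (Suc s) * e)"
  have "inj_on ?g Z"
  proof (rule inj_onI)
    fix x y assume "?g x = ?g y"
    moreover obtain b e b' e' where xy: "x = (b, e)" "y = (b', e')"
      by fastforce
    ultimately have "e = e'"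
      by (simp add: algebra_simps)
    with \<open>?g x = ?g y\<close> show "x = y"
      unfolding xy by simp
  qed
  moreover have "?g ` Z \<subseteq> {(x, y). x \<in> U \<and> y \<in> U \<and> x < y}"
    using Z by auto
  moreover have "finite {(x, y). x \<in> U \<and> y \<in> U \<and> x < y}"
    by (rule finite_subset[of _ "U \<times> U"]) (use assms(1) in auto)
  ultimately have "card (?g ` Z) \<le> card {(x, y). x \<in> U \<and> y \<in> U \<and> x < y}"
    by (intro card_mono)
  with \<open>inj_on ?g Z\<close> have "card Z \<le> card {(x, y). x \<in> U \<and> y \<in> U \<and> x < y}"
    by (simp add: card_image)
  then show ?thesis
    using card_less_pairs[OF assms(1)] by simp
qed

lemma card_AP_pairs_split_le:
  assumes "finite W" "L \<subseteq> W" and lower: "\<forall>x\<in>L. \<forall>y\<in>W - L. x < y" and "0 < s"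
  shows "card (AP_pairs (Suc (Suc s)) W) \<le> card (AP_pairs (Suc s) L) + AP_max 1 (card (W - L))"
proof -
  have down: "y \<in> L" if "x \<in> L" "y \<in> W" "y \<le> x" for x y
    using lower that not_le by blast
  define Z where "Z = {(b, e) \<in> AP_pairs (Suc (Suc s)) W. b + real s * e \<notin> L}"
  have "AP_pairs (Suc (Suc s)) W \<subseteq> AP_pairs (Suc s) L \<union> Z"
  proof clarify
    fix b e assume "(b, e) \<in> AP_pairs (Suc (Suc s)) W" "(b, e) \<notin> Z"
    then have "0 < e" and W: "\<And>j. j \<le> Suc s \<Longrightarrow> b + real j * e \<in> W"
      and "b + real s * e \<in> L"
      unfolding AP_pairs_def Z_def by auto
    moreover have "b + real j * e \<le> b + real s * e" if "j \<le> s" for j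
      using that \<open>0 < e\<close> by (simp add: mult_right_mono)
    ultimately have "b + real j * e \<in> L" if "j \<le> s" for j
      using down[of "b + real s * e" "b + real j * e"] W[of j] that by simp
    then show "(b, e) \<in> AP_pairs (Suc s) L"
      using \<open>0 < e\<close> unfolding AP_pairs_def by auto
  qed
  moreover have "finite (AP_pairs (Suc s) L)"
    using assms finite_AP_pairs[of L "Suc s"] finite_subset[of L W] by auto
  moreover have "finite Z"
    unfolding Z_def by (rule finite_subset[OF _ finite_AP_pairs[OF \<open>finite W\<close>]]) auto
  ultimately have "card (AP_pairs (Suc (Suc s)) W) \<le> card (AP_pairs (Suc s) L \<union> Z)"
    by (intro card_mono) auto
  also have "\<dots> \<le> card (AP_pairs (Suc s) L) + card Z"
    by (rule card_Un_le)
  also have "card Z \<le> AP_max 1 (card (W - L))"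
  proof (rule card_le_by_last_two)
    fix b e assume "(b, e) \<in> Z"
    then have "0 < e" and W: "\<And>j. j \<le> Suc s \<Longrightarrow> b + real j * e \<in> W"
      and "b + real s * e \<notin> L"
      unfolding AP_pairs_def Z_def by auto
    moreover have "b + real s * e < b + real (Suc s) * e"
      using \<open>0 < e\<close> by (simp add: algebra_simps)
    ultimately show "0 < e \<and> b + real s * e \<in> W - L \<and> b + real (Suc s) * e \<in> W - L"
      using down[of "b + real (Suc s) * e" "b + real s * e"] W[of s] W[of "Suc s"] by auto
  qed (use assms in simp)
  finally show ?thesis
    by simp
qed

lemma card_AP_pairs_le:
  assumes "finite W" "0 < s"
  shows "card (AP_pairs (Suc s) W) \<le> AP_max s (card W)"
  using assms(2,1)
proof (induction s arbitrary: W rule: nat_induct_non_zero)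
  case 1
  then show ?case
    by (intro card_le_by_last_two[of W _ 0]) (auto simp: AP_pairs_def)
next
  case (Suc s)
  define c where "c = (card W + s) div Suc s"
  have c: "c \<le> card W" "AP_max (Suc s) (card W) = AP_max s (card W - c) + AP_max 1 c"
    using AP_max_Suc_split[OF Suc.hyps(1)] unfolding c_def by auto
  obtain L where L: "L \<subseteq> W" "card L = card W - c" "\<forall>x\<in>L. \<forall>y\<in>W - L. x < y"
    using obtain_lower_part[OF Suc.prems(1), of "card W - c"] by auto
  have "finite L"
    using L(1) Suc.prems(1) finite_subset by blast
  have "card (W - L) = c"
    using L c(1) \<open>finite L\<close> by (simp add: card_Diff_subset)
  then have "card (AP_pairs (Suc (Suc s)) W) \<le> card (AP_pairs (Suc s) L) + AP_max 1 c"
    using card_AP_pairs_split_le[OF Suc.prems(1) L(1,3) Suc.hyps(1)] by simp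
  also have "\<dots> \<le> AP_max (Suc s) (card W)"
    using Suc.IH[OF \<open>finite L\<close>] L(2) c(2) by simp
  finally show ?case .
qed

lemma S_AP_le_AP_max:
  assumes "finite W" "2 \<le> k"
  shows "S_AP k W \<le> AP_max (k - 1) (card W)"
  using card_AP_pairs_le[OF assms(1), of "k - 1"] S_AP_eq_card_AP_pairs[OF assms(2)] assms(2)
  by simp

lemma AP_pairs_affine_image_cases:
  assumes "0 < d" "2 \<le> k" "(b, e) \<in> AP_pairs k ((\<lambda>i. a + real i * d) ` J)"
  obtains i t where "(i, t) \<in> nat_AP_pairs k J" "b = a + real i * d" "e = real t * d"
proof -
  let ?g = "\<lambda>i. a + real i * d"
  have "0 < e" and V: "\<And>j. j < k \<Longrightarrow> b + real j * e \<in> ?g ` J"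
    using assms(3) unfolding AP_pairs_def by auto
  obtain i i' where "b = ?g i" "b + e = ?g i'"
    using V[of 0] V[of 1] \<open>2 \<le> k\<close> by fastforce
  then have "e = (real i' - real i) * d"
    by (simp add: algebra_simps)
  with \<open>0 < e\<close> assms(1) have "i < i'"
    by (simp add: zero_less_mult_iff)
  define t where "t = i' - i"
  have "e = real t * d" "0 < t"
    using \<open>e = (real i' - real i) * d\<close> \<open>i < i'\<close> by (auto simp: t_def of_nat_diff)
  have "?g (i + j * t) \<in> ?g ` J" if "j < k" for j
    using V[OF that] unfolding \<open>b = ?g i\<close> \<open>e = real t * d\<close> by (simp add: algebra_simps)
  moreover have "inj ?g"
    using assms(1) by (auto simp: inj_def)
  ultimately have "(i, t) \<in> nat_AP_pairs k J"
    using inj_image_mem_iff[OF \<open>inj ?g\<close>] \<open>0 < t\<close> unfolding nat_AP_pairs_def by blast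
  then show ?thesis
    using \<open>b = ?g i\<close> \<open>e = real t * d\<close> by (rule that)
qed

lemma card_AP_pairs_affine_image:
  assumes "0 < d" "2 \<le> k"
  shows "card (AP_pairs k ((\<lambda>i. a + real i * d) ` J)) = card (nat_AP_pairs k J)"
proof -
  let ?g = "\<lambda>i. a + real i * d"
  have "bij_betw (\<lambda>(i, t). (?g i, real t * d)) (nat_AP_pairs k J) (AP_pairs k (?g ` J))"
  proof (rule bij_betwI')
    fix x y assume "x \<in> nat_AP_pairs k J" "y \<in> nat_AP_pairs k J"
    then show "((\<lambda>(i, t). (?g i, real t * d)) x = (\<lambda>(i, t). (?g i, real t * d)) y) = (x = y)"
      using assms(1) by (cases x; cases y) auto
  next
    fix x assume "x \<in> nat_AP_pairs k J"
    then obtain i t where x: "x = (i, t)" "0 < t" and J: "\<And>j. j < k \<Longrightarrow> i + j * t \<in> J"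
      unfolding nat_AP_pairs_def by auto
    have g: "?g i + real j * (real t * d) = ?g (i + j * t)" for j
      by (simp add: algebra_simps)
    have "\<forall>j<k. ?g i + real j * (real t * d) \<in> ?g ` J"
      using J unfolding g by blast
    with x assms(1) show "(\<lambda>(i, t). (?g i, real t * d)) x \<in> AP_pairs k (?g ` J)"
      unfolding AP_pairs_def by simp
  next
    fix z assume z: "z \<in> AP_pairs k (?g ` J)"
    obtain b e where "z = (b, e)"
      by fastforce
    with z obtain i t where "(i, t) \<in> nat_AP_pairs k J" "b = ?g i" "e = real t * d"
      using AP_pairs_affine_image_cases[OF assms] by blast
    with \<open>z = (b, e)\<close> show "\<exists>x\<in>nat_AP_pairs k J. z = (\<lambda>(i, t). (?g i, real t * d)) x"
      by (intro bexI[of _ "(i, t)"]) auto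
  qed
  then show ?thesis
    by (simp add: bij_betw_same_card)
qed

lemma S_AP_affine_image:
  assumes "0 < d" "2 \<le> k"
  shows "S_AP k ((\<lambda>i. a + real i * d) ` J) = card (nat_AP_pairs k J)"
  using S_AP_eq_card_AP_pairs card_AP_pairs_affine_image assms by simp

lemma S_AP_AP_set_minus:
  assumes "0 < d" "2 \<le> k"
  shows "S_AP k (AP_set a d N - (\<lambda>i. a + real i * d) ` I) = card (nat_AP_pairs k ({..<N} - I))"
proof -
  have "inj (\<lambda>i. a + real i * d)"
    using assms(1) by (auto simp: inj_def)
  then have "AP_set a d N - (\<lambda>i. a + real i * d) ` I = (\<lambda>i. a + real i * d) ` ({..<N} - I)"
    by (simp add: AP_set_eq_image image_set_diff)
  then show ?thesis
    using S_AP_affine_image[OF assms] by simp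
qed

lemma mem_nat_AP_pairs_lessThan_diff:
  "(i, t) \<in> nat_AP_pairs (Suc s) ({..<N} - I) \<longleftrightarrow> 0 < t \<and> i + s * t < N \<and> (\<forall>j\<le>s. i + j * t \<notin> I)"
proof -
  have "i + j * t < N" if "j \<le> s" "i + s * t < N" for j
    using that mult_le_mono1[of j s t] by linarith
  then show ?thesis
    unfolding nat_AP_pairs_def by (auto simp: less_Suc_eq_le)
qed

lemma finite_nat_AP_pairs:
  assumes "finite J" "0 < s"
  shows "finite (nat_AP_pairs (Suc s) J)"
proof -
  have "nat_AP_pairs (Suc s) J \<subseteq> (\<lambda>(x, y). (x, y - x)) ` (J \<times> J)"
  proof clarify
    fix i t assume "(i, t) \<in> nat_AP_pairs (Suc s) J"
    then have "i \<in> J" "i + t \<in> J"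
      using \<open>0 < s\<close> unfolding nat_AP_pairs_def by (auto dest: spec[of _ 0] spec[of _ 1])
    then show "(i, t) \<in> (\<lambda>(x, y). (x, y - x)) ` (J \<times> J)"
      by (auto intro!: image_eqI[of _ _ "(i, i + t)"])
  qed
  then show ?thesis
    using assms(1) finite_subset by blast
qed

lemma nat_AP_pairs_ending_at:
  fixes s N :: nat
  assumes "0 < s"
  shows "{(i, t). 0 < t \<and> i + s * t = N} = (\<lambda>t. (N - s * t, t)) ` {1..N div s}"
  using assms by (auto simp: image_iff less_eq_div_iff_mult_less_eq mult.commute)

lemma card_nat_AP_pairs_lessThan:
  assumes "0 < s"
  shows "card (nat_AP_pairs (Suc s) {..<N}) = AP_max s N"
proof (induction N)
  case 0
  have "nat_AP_pairs (Suc s) {..<0} = {}"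
    unfolding nat_AP_pairs_def by auto
  then show ?case by (simp add: AP_max_def)
next
  case (Suc N)
  let ?E = "{(i, t). 0 < t \<and> i + s * t = N}"
  have "nat_AP_pairs (Suc s) {..<Suc N} = nat_AP_pairs (Suc s) {..<N} \<union> ?E"
    "nat_AP_pairs (Suc s) {..<N} \<inter> ?E = {}"
    using mem_nat_AP_pairs_lessThan_diff[of _ _ s _ "{}"] by auto
  moreover have "finite ?E" "card ?E = N div s"
    unfolding nat_AP_pairs_ending_at[OF assms] by (auto simp: card_image inj_on_def)
  ultimately show ?case
    using Suc.IH finite_nat_AP_pairs[OF _ assms] by (simp add: card_Un_disjoint AP_max_Suc)
qed

lemma card_nat_AP_pairs_avoiding_add_hitting:
  assumes "0 < s"
  shows "card (nat_AP_pairs (Suc s) ({..<N} - I))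
    + card (nat_AP_pairs (Suc s) {..<N} - nat_AP_pairs (Suc s) ({..<N} - I)) = AP_max s N"
proof -
  have sub: "nat_AP_pairs (Suc s) ({..<N} - I) \<subseteq> nat_AP_pairs (Suc s) {..<N}"
    unfolding nat_AP_pairs_def by auto
  have fin: "finite (nat_AP_pairs (Suc s) {..<N})"
    using finite_nat_AP_pairs[OF _ assms] by simp
  show ?thesis
    using card_Diff_subset[OF finite_subset[OF sub fin] sub] card_mono[OF fin sub]
      card_nat_AP_pairs_lessThan[OF assms] by simp
qed

lemma nat_AP_pairs_hitting_second:
  assumes "0 < s" "s \<le> n"
  shows "nat_AP_pairs (Suc s) {..<Suc n} - nat_AP_pairs (Suc s) ({..<Suc n} - {1})
    = insert (0, 1) (Pair 1 ` {1..(n - 1) div s})"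
proof (intro set_eqI, clarify)
  fix i t :: nat
  have hit: "(i, t) \<in> nat_AP_pairs (Suc s) {..<Suc n} - nat_AP_pairs (Suc s) ({..<Suc n} - {1})
      \<longleftrightarrow> 0 < t \<and> i + s * t \<le> n \<and> (\<exists>j\<le>s. i + j * t = 1)"
    using mem_nat_AP_pairs_lessThan_diff[of i t s "Suc n" "{}"]
      mem_nat_AP_pairs_lessThan_diff[of i t s "Suc n" "{1}"] by auto
  consider "i = 0" | "i = 1" | "2 \<le> i"
    by linarith
  then show "(i, t) \<in> nat_AP_pairs (Suc s) {..<Suc n} - nat_AP_pairs (Suc s) ({..<Suc n} - {1})
      \<longleftrightarrow> (i, t) \<in> insert (0, 1) (Pair 1 ` {1..(n - 1) div s})"
  proof cases
    case 1
    then show ?thesis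
      unfolding hit using assms by (auto intro: exI[of _ 1])
  next
    case 2
    then show ?thesis
      unfolding hit using assms by (auto simp: less_eq_div_iff_mult_less_eq mult.commute)
  next
    case 3
    then show ?thesis
      unfolding hit by auto
  qed
qed

lemma card_nat_AP_pairs_without_second:
  assumes "0 < s" "s \<le> n"
  shows "card (nat_AP_pairs (Suc s) ({..<Suc n} - {1})) + (if s dvd n then 0 else 1) = AP_max s n"
proof -
  have "card (insert (0, 1) (Pair (1::nat) ` {1..(n - 1) div s})) = Suc ((n - 1) div s)"
    by (subst card_insert_disjoint) (auto simp: card_image inj_on_def)
  moreover have "n div s = (n - 1) div s + (if s dvd n then 1 else 0)"
    using assms div_Suc[of "n - 1" s] by (auto simp: dvd_eq_mod_eq_0)
  ultimately show ?thesis
    using card_nat_AP_pairs_avoiding_add_hitting[OF assms(1), of "Suc n" "{1}"]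
      nat_AP_pairs_hitting_second[OF assms]
    by (simp add: AP_max_Suc split: if_splits)
qed

text \<open>The progressions counted: those ending at \<open>n\<close>, those starting at \<open>1\<close> and ending
  below \<open>n\<close>, and two of difference \<open>1\<close>.\<close>
lemma card_nat_AP_pairs_hitting_second_and_second_to_last_ge:
  assumes "3 \<le> s" "s < n"
  defines "H \<equiv> nat_AP_pairs (Suc s) {..<Suc (Suc n)} - nat_AP_pairs (Suc s) ({..<Suc (Suc n)} - {1, n})"
  shows "n div s + (n - 2) div s + 2 \<le> card H"
proof -
  define E where "E = (\<lambda>t. (n - s * t, t)) ` {1..n div s}"
  define F where "F = Pair (1::nat) ` {1..(n - 2) div s}"
  define G where "G = {(0, 1), (n + 1 - s, 1::nat)}"
  have H: "(i, t) \<in> H \<longleftrightarrow> 0 < t \<and> i + s * t \<le> Suc n \<and> (\<exists>j\<le>s. i + j * t \<in> {1, n})" for i t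
    using mem_nat_AP_pairs_lessThan_diff[of i t s "Suc (Suc n)" "{}"]
      mem_nat_AP_pairs_lessThan_diff[of i t s "Suc (Suc n)" "{1, n}"]
    unfolding H_def by auto
  have E: "(i, t) \<in> E \<Longrightarrow> i + s * t = n \<and> (i, t) \<in> H" for i t
    using assms(1) by (auto simp: E_def H less_eq_div_iff_mult_less_eq mult.commute)
  have F: "(i, t) \<in> F \<Longrightarrow> i + s * t < n \<and> (i, t) \<in> H" for i t
    using assms(1,2) by (auto simp: F_def H less_eq_div_iff_mult_less_eq mult.commute intro: exI[of _ 0])
  have G: "(i, t) \<in> G \<Longrightarrow> i + s * t \<noteq> n \<and> (i, t) \<in> H" for i t
    using assms(1,2) by (auto simp: G_def H intro: exI[of _ 1] exI[of _ "s - 1"])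
  have "E \<inter> F = {}" "E \<inter> G = {}"
    using E F G by fastforce+
  moreover have "F \<inter> G = {}"
    using assms(2) by (auto simp: F_def G_def)
  moreover have "finite E" "finite F" "finite G"
    by (simp_all add: E_def F_def G_def)
  ultimately have "card (E \<union> F \<union> G) = card E + card F + card G"
    by (simp add: card_Un_disjoint Int_Un_distrib2)
  moreover have "card E = n div s" "card F = (n - 2) div s" "card G = 2"
    using assms(1,2) by (auto simp: E_def F_def G_def card_image inj_on_def)
  moreover have "card (E \<union> F \<union> G) \<le> card H"
  proof (rule card_mono)
    show "finite H"
      using finite_nat_AP_pairs[of "{..<Suc (Suc n)}" s] assms(1) unfolding H_def by auto
    show "E \<union> F \<union> G \<subseteq> H"
      using E F G by fast
  qed
  ultimately show ?thesis
    by simp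
qed

lemma card_nat_AP_pairs_without_second_and_second_to_last:
  assumes "3 \<le> s" "s < n"
  shows "card (nat_AP_pairs (Suc s) ({..<Suc (Suc n)} - {1, n})) < AP_max s n"
proof -
  have "Suc n div s \<le> (n - 2 + s) div s"
    using assms by (intro div_le_mono) linarith
  also have "\<dots> = (n - 2) div s + 1"
    using assms by (intro div_add_self2) simp
  finally show ?thesis
    using card_nat_AP_pairs_avoiding_add_hitting[of s "Suc (Suc n)" "{1, n}"]
      card_nat_AP_pairs_hitting_second_and_second_to_last_ge[OF assms] assms
    by (simp add: AP_max_Suc)
qed

lemma reflect_AP_set:
  "(\<lambda>x. c - x) ` AP_set b e k = AP_set (c - b - real (k - 1) * e) e k"
proof -
  have "(\<lambda>x. c - x) ` AP_set b e k = (\<lambda>i. c - b - real (k - 1) * e + real i * e) ` (\<lambda>i. k - 1 - i) ` {..<k}"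
    unfolding AP_set_eq_image image_image
    by (rule image_cong) (auto simp: of_nat_diff algebra_simps)
  also have "(\<lambda>i. k - 1 - i) ` {..<k} = {..<k}"
    by (rule endo_inj_surj) (auto simp: inj_on_def)
  finally show ?thesis
    by (simp add: AP_set_eq_image)
qed

lemma is_kAP_reflect: "is_kAP k P \<Longrightarrow> is_kAP k ((\<lambda>x. c - x) ` P)"
  unfolding is_kAP_def using reflect_AP_set by blast

lemma S_AP_reflect: "S_AP k ((\<lambda>x. c - x) ` V) = S_AP k V"
proof -
  have "bij_betw (image (\<lambda>x. c - x)) {P. is_kAP k P \<and> P \<subseteq> V} {P. is_kAP k P \<and> P \<subseteq> (\<lambda>x. c - x) ` V}"
    by (rule bij_betw_byWitness[where f' = "image (\<lambda>x. c - x)"])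
      (auto simp: image_image is_kAP_reflect image_mono)
  then show ?thesis
    unfolding S_AP_def by (simp add: bij_betw_same_card)
qed

lemma optimal_AP_iff:
  assumes "2 \<le> k"
  shows "optimal_AP k n V \<longleftrightarrow> finite V \<and> card V = n \<and> S_AP k V = AP_max (k - 1) n"
proof -
  have "S_AP k (AP_set 0 1 n) = AP_max (k - 1) n"
    using S_AP_AP_set_minus[of 1 k 0 n "{}"] card_nat_AP_pairs_lessThan[of "k - 1" n] assms
    by (simp add: Suc_diff_le)
  then have "\<exists>W. finite W \<and> card W = n \<and> S_AP k W = AP_max (k - 1) n"
    by (intro exI[of _ "AP_set 0 1 n"]) (simp add: card_AP_set finite_AP_set)
  then show ?thesis
    using S_AP_le_AP_max[OF _ assms] unfolding optimal_AP_def by (metis le_antisym)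
qed

lemma optimal_AP_reflect: "optimal_AP k n ((\<lambda>x. c - x) ` V) \<longleftrightarrow> optimal_AP k n V"
proof -
  have "inj (\<lambda>x::real. c - x)"
    by (auto simp: inj_def)
  then show ?thesis
    unfolding optimal_AP_def by (simp add: S_AP_reflect card_image finite_image_iff inj_on_subset)
qed

lemma optimal_AP_AP_set:
  assumes "0 < d" "2 \<le> k"
  shows "optimal_AP k N (AP_set a d N)"
  using S_AP_AP_set_minus[OF assms, of a N "{}"] card_nat_AP_pairs_lessThan[of "k - 1" N] assms
  by (simp add: optimal_AP_iff card_AP_set finite_AP_set Suc_diff_le)

lemma optimal_AP_AP_set_without_second:
  assumes "0 < d" "0 < s" "s \<le> n"
  shows "optimal_AP (Suc s) n (AP_set a d (Suc n) - {a + d}) \<longleftrightarrow> s dvd n"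
proof -
  have "S_AP (Suc s) (AP_set a d (Suc n) - {a + d}) = card (nat_AP_pairs (Suc s) ({..<Suc n} - {1}))"
    using S_AP_AP_set_minus[OF assms(1), of "Suc s" a "Suc n" "{1}"] assms(2) by simp
  moreover have "card (AP_set a d (Suc n) - {a + d}) = n"
    using assms by (simp add: card_AP_set mem_AP_set exI[of _ 1])
  ultimately show ?thesis
    using card_nat_AP_pairs_without_second[OF assms(2,3)] assms(2)
    by (auto simp: optimal_AP_iff finite_AP_set split: if_splits)
qed

lemma optimal_AP_AP_set_without_second_to_last:
  assumes "0 < d" "0 < s" "s \<le> n"
  shows "optimal_AP (Suc s) n (AP_set a d (Suc n) - {a + real (n - 1) * d}) \<longleftrightarrow> s dvd n"
proof -
  let ?c = "2 * a + real n * d"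
  have "(\<lambda>x. ?c - x) ` AP_set a d (Suc n) = AP_set a d (Suc n)"
    by (simp add: reflect_AP_set)
  moreover have "?c - (a + real (n - 1) * d) = a + d"
    using assms by (simp add: of_nat_diff algebra_simps)
  ultimately have "(\<lambda>x. ?c - x) ` (AP_set a d (Suc n) - {a + real (n - 1) * d}) = AP_set a d (Suc n) - {a + d}"
    by (simp add: image_set_diff inj_on_def)
  then show ?thesis
    using optimal_AP_reflect optimal_AP_AP_set_without_second[OF assms] by metis
qed

lemma not_optimal_AP_AP_set_without_second_and_second_to_last:
  assumes "0 < d" "3 \<le> s" "s < n"
  shows "\<not> optimal_AP (Suc s) n (AP_set a d (Suc (Suc n)) - {a + d, a + real n * d})"
proof -
  have "S_AP (Suc s) (AP_set a d (Suc (Suc n)) - {a + d, a + real n * d})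
      = card (nat_AP_pairs (Suc s) ({..<Suc (Suc n)} - {1, n}))"
    using S_AP_AP_set_minus[OF assms(1), of "Suc s" a "Suc (Suc n)" "{1, n}"] assms(2) by simp
  then show ?thesis
    using card_nat_AP_pairs_without_second_and_second_to_last[OF assms(2,3)] assms(2)
    by (simp add: optimal_AP_iff)
qed

theorem mainTheorem11:
  fixes n k m :: nat and a d p q :: real and A D :: "real set"
  assumes "4 \<le> k" and "k \<le> n"
    and "d > 0" and "A = AP_set a d m"
    and "p = a + d" and "q = a + real (m - 2) * d"
    and "D \<subseteq> {p, q}"
    and "card (A - D) = n"
  shows "optimal_AP k n (A - D) \<longleftrightarrow>
           (D = {} \<or> ((k - 1) dvd n \<and> card D = 1))"
proof -
  obtain s where k: "k = Suc s" and "3 \<le> s"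
    using \<open>4 \<le> k\<close> by (intro that[of "k - 1"]) auto
  have "n \<le> m"
    using card_mono[OF finite_AP_set, of "A - D" a d m] assms(3,4,8) by (simp add: card_AP_set)
  have "p \<in> A" "q \<in> A" "p \<noteq> q"
    using assms(2-6) \<open>n \<le> m\<close> \<open>3 \<le> s\<close> k by (auto simp: mem_AP_set intro!: exI[of _ 1] exI[of _ "m - 2"])
  then have "D \<subseteq> A" "finite D"
    using assms(7) finite_subset[of D "{p, q}"] by auto
  then have "n = m - card D"
    using assms(3,4,8) by (simp add: card_Diff_subset card_AP_set)
  consider "D = {}" | "D = {p}" | "D = {q}" | "D = {p, q}"
    using assms(7) by blast
  then show ?thesis
  proof cases
    case 1
    then show ?thesis
      using optimal_AP_AP_set[OF assms(3)] assms(1,4) \<open>n = m - card D\<close> by simp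
  next
    case 2
    then show ?thesis
      using optimal_AP_AP_set_without_second[OF assms(3), of s n a] assms k \<open>n = m - card D\<close>
      by (simp add: Suc_diff_1)
  next
    case 3
    then show ?thesis
      using optimal_AP_AP_set_without_second_to_last[OF assms(3), of s n a] assms k \<open>n = m - card D\<close>
      by (simp add: Suc_diff_1 numeral_2_eq_2)
  next
    case 4
    with \<open>p \<noteq> q\<close> \<open>n = m - card D\<close> assms(2) k have "card D = 2" "m = Suc (Suc n)"
      by auto
    then show ?thesis
      using not_optimal_AP_AP_set_without_second_and_second_to_last[OF assms(3) \<open>3 \<le> s\<close>, of n a]
        4 assms(2,4-6) k by simp
  qed
qed

end
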